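(* For every positive integer $n$, $$n^2-1\ \Big|\ \sum_{k=0}^{n-1}\binom{n-1}{k}\binom{-n-1}{k}C_k3^{n-1-k}a(n,k),$$ where $$a(n,k)=4k^2n^2-8kn^3-14k^2n-14kn^2-4n^3+13k^2-11kn-26n^2+39k+4n+26.$$
   Context: $C_k=\binom{2k}{k}/(k+1)$; $\binom{x}{k}=x(x-1)\cdots(x-k+1)/k!$ for any integer $x$. Divisibility by $0$ means the quantity equals $0$. *)

theory Defs
  imports Main
begin

definition binomZ :: "int \<Rightarrow> nat \<Rightarrow> int" where
  "binomZ x k = (\<Prod>i<k. x - int i) div int (fact k)"

definition catalan :: "nat \<Rightarrow> int" where
  "catalan k = int ((2*k) choose k) div int (k+1)"

definition a_coef :: "int \<Rightarrow> int \<Rightarrow> int" where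
  "a_coef n k = 4*k^2*n^2 - 8*k*n^3 - 14*k^2*n - 14*k*n^2 - 4*n^3 + 13*k^2
      - 11*k*n - 26*n^2 + 39*k + 4*n + 26"

end

(* The sum is divisible term by term. The two binomials are C(n-1,k) and (-1)^k C(n+k,k),
   and k C(n-1,k) is a multiple of n-1 while k C(n+k,k) is a multiple of n+1. The polynomial
   a(n,k) is a combination of k^2, (n+1) k, (n-1) k and n^2-1, so each of its parts picks up
   the missing factor of n^2-1 from one of these absorption identities. *)

theory Submission
  imports Defs Complex_Main
begin

(* binomZ is gchoose on int; the syntax of gchoose admits only fields after Complex_Main,
   so the library's int facts are used in unfolded form. *)

lemma binomZ_of_nat: "binomZ (int m) k = int (m choose k)"
  by (simp add: binomZ_def int_binomial gbinomial_prod_rev atLeast0LessThan)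

lemma binomZ_negated: "binomZ (- int m - 1) k = (-1) ^ k * int ((m + k) choose k)"
  using gbinomial_int_negated_upper[of "- int m - 1" k] int_binomial[of "m + k" k]
  by (simp add: binomZ_def gbinomial_prod_rev atLeast0LessThan add.commute)

lemma dvd_times_binomial: "n dvd k * (n choose k)"
  by (cases "k = 0") (simp_all add: times_binomial_minus1_eq)

lemma Suc_dvd_times_binomial_add: "Suc n dvd k * ((n + k) choose k)"
proof (cases k)
  case (Suc j)
  then show ?thesis
    using Suc_times_binomial_add[of j n] by (metis add_Suc_right add.commute dvd_triv_left)
qed simp

lemma sq_minus_one_dvd_mult_a_coef:
  fixes N K A B :: int
  assumes "N - 1 dvd K * A" and "N + 1 dvd K * B"
  shows "N\<^sup>2 - 1 dvd A * B * a_coef N K"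
proof -
  obtain A' B' where A': "K * A = (N - 1) * A'" and B': "K * B = (N + 1) * B'"
    using assms by (auto elim!: dvdE)
  \<comment> \<open>after substituting K*A and K*B, every summand carries both factors N - 1 and N + 1\<close>
  have "A * B * a_coef N K =
      (4*N^2 - 14*N + 13) * (K*A) * (K*B) + 3*(N + 1) * (K*A) * B - 22*(N - 1) * A * (K*B)
      - (N^2 - 1) * A * B * (K*(8*N + 14) + 4*N + 26)"
    unfolding a_coef_def by (simp add: algebra_simps power2_eq_square power3_eq_cube)
  also have "\<dots> = (N^2 - 1) * ((4*N^2 - 14*N + 13) * A' * B' + 3 * A' * B - 22 * A * B'
      - A * B * (K*(8*N + 14) + 4*N + 26))"
    unfolding A' B' by (simp add: algebra_simps power2_eq_square)
  finally show ?thesis by simp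
qed

theorem lemma3p3:
  fixes n :: nat
  assumes "n \<ge> 1"
  shows "(int n ^ 2 - 1) dvd
    (\<Sum>k=0..n-1. binomZ (int n - 1) k * binomZ (- int n - 1) k * catalan k
        * 3 ^ (n - 1 - k) * a_coef (int n) (int k))"
proof (rule dvd_sum)
  fix k
  have n1: "int n - 1 = int (n - 1)" using assms by simp
  have "int n - 1 dvd int k * int ((n - 1) choose k)"
    unfolding n1 of_nat_mult[symmetric] int_dvd_int_iff by (rule dvd_times_binomial)
  moreover have "int n + 1 dvd int k * int ((n + k) choose k)"
    using Suc_dvd_times_binomial_add[of n k] by (simp add: add.commute flip: of_nat_mult int_dvd_int_iff)
  ultimately have "int n ^ 2 - 1 dvd
      int ((n - 1) choose k) * int ((n + k) choose k) * a_coef (int n) (int k)"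
    by (rule sq_minus_one_dvd_mult_a_coef)
  then have "int n ^ 2 - 1 dvd
      int ((n - 1) choose k) * int ((n + k) choose k) * a_coef (int n) (int k)
      * ((-1) ^ k * catalan k * 3 ^ (n - 1 - k))"
    by (rule dvd_mult2)
  then show "int n ^ 2 - 1 dvd binomZ (int n - 1) k * binomZ (- int n - 1) k * catalan k
      * 3 ^ (n - 1 - k) * a_coef (int n) (int k)"
    unfolding n1 binomZ_of_nat binomZ_negated by (simp only: mult_ac)
qed

end
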